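(* Let $c_{n,m}$ be the number of C-decorated paths ending at $(n,m)$. Then \[ c_{n,m}=c_{n,m-1}+(m+1)c_{n-1,m}-(m-1)c_{n-2,m-1}\quad(n\ge m\ge1),\qquad c_{n,m}=0\quad(n<m),\qquad c_{n,0}=1\quad(n\ge0). \] Moreover, the number of compacted binary trees of size $n$ equals $c_{n,n}$.
   Context: A horizontally decorated path is a lattice path from $(0,0)$ with steps $H=(1,0)$, $V=(0,1)$ in the region $0\le y\le x$, each $H$ step decorated by a number in $\{1,\dots,k+1\}$, $k$ its $y$-coordinate. Give each $H$ step the label equal to its decoration and each $V$ step the label equal to its final $y$-coordinate plus one. To each $V$ step associate a pair $(v_1,v_2)$: $v_2$ is the label of the step immediately before $V$; for $v_1$, draw the line of slope $1$ from the endpoint of $V$ in the south-west direction until it touches the path again, and let $S''$ be the last step before $V$ whose endpoint lies on this line; $v_1$ is the label of $S''$, or $1$ if there is no such step. A C-decorated path is a horizontally decorated path such that for every occurrence of three consecutive steps $HHV$ with $H$-decorations $h_1,h_2$, $(h_1,h_2)\ne(v_1,v_2)$ for every $V$ step preceding this occurrence. (In the recurrence, for $m=1$ the last term has coefficient $0$.) Binary trees are rooted plane trees in which each node is a leaf or an internal node with ordered left/right subtrees; size = number of internal nodes; postorder visits left, right, root. A relaxed binary tree of size $n$ is obtained from a binary tree with $n$ internal nodes (spine) by keeping the left-most leaf and turning every other leaf $\ell$ into a pointer to a vertex (internal node or left-most leaf) preceding $\ell$ in postorder; it is a DAG on the internal nodes and the left-most leaf where each internal node's left/right out-edge goes to its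 child if that child is internal or the left-most leaf, otherwise to the pointer's target. For a vertex $u$, $B(u)$ is a single leaf if $u$ is the left-most leaf, else the binary tree with left/right subtrees $B(v),B(w)$, $v,w$ the left/right out-neighbours of $u$. A compacted binary tree is a relaxed binary tree with $B(u)\not\cong B(v)$ for all distinct vertices $u\neq v$. *)

theory Defs
  imports Main
begin

text \<open>A step is either a horizontal step H carrying its decoration, or a vertical step V.
  A path is a list of steps starting at (0,0).\<close>
datatype step = H nat | V

definition xcoord :: "step list \<Rightarrow> nat" where
  "xcoord xs = length (filter (\<lambda>s. s \<noteq> V) xs)"

definition ycoord :: "step list \<Rightarrow> nat" where
  "ycoord xs = length (filter (\<lambda>s. s = V) xs)"

text \<open>The endpoint of step i (0-based) is the point reached after the prefix take (Suc i) xs;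
  the starting point of step i is the point reached after take i xs.\<close>
definition hdec_path :: "step list \<Rightarrow> bool" where
  "hdec_path xs \<longleftrightarrow>
     (\<forall>i < length xs. ycoord (take (Suc i) xs) \<le> xcoord (take (Suc i) xs)) \<and>
     (\<forall>i < length xs. \<forall>d. xs ! i = H d \<longrightarrow> 1 \<le> d \<and> d \<le> ycoord (take i xs) + 1)"

definition step_label :: "step list \<Rightarrow> nat \<Rightarrow> nat" where
  "step_label xs i = (case xs ! i of H d \<Rightarrow> d | V \<Rightarrow> ycoord (take (Suc i) xs) + 1)"

definition diag :: "step list \<Rightarrow> nat \<Rightarrow> int" where
  "diag xs i = int (xcoord (take (Suc i) xs)) - int (ycoord (take (Suc i) xs))"

definition v2 :: "step list \<Rightarrow> nat \<Rightarrow> nat" where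
  "v2 xs i = step_label xs (i - 1)"

definition v1 :: "step list \<Rightarrow> nat \<Rightarrow> nat" where
  "v1 xs i = (let S = {j. j < i \<and> diag xs j = diag xs i}
              in if S = {} then 1 else step_label xs (Max S))"

definition C_decorated :: "step list \<Rightarrow> bool" where
  "C_decorated xs \<longleftrightarrow> hdec_path xs \<and>
     (\<forall>j h1 h2. j + 2 < length xs \<longrightarrow> xs ! j = H h1 \<longrightarrow> xs ! (j + 1) = H h2 \<longrightarrow>
        xs ! (j + 2) = V \<longrightarrow>
        (\<forall>i < j. xs ! i = V \<longrightarrow> (h1, h2) \<noteq> (v1 xs i, v2 xs i)))"

definition cnum :: "nat \<Rightarrow> nat \<Rightarrow> nat" where
  "cnum n m = card {xs. C_decorated xs \<and> xcoord xs = n \<and> ycoord xs = m}"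

datatype btree = Lf | Nd btree btree

text \<open>A relaxed binary tree is encoded by its spine in which the left-most leaf is
  LeftLeaf and every other leaf is a pointer Ptr k to the vertex with index k in the
  postorder enumeration (starting from 0) of all nodes (internal nodes and leaves) of the spine.\<close>
datatype rtree = LeftLeaf | Ptr nat | Node rtree rtree

fun rsize :: "rtree \<Rightarrow> nat" where
  "rsize LeftLeaf = 0"
| "rsize (Ptr k) = 0"
| "rsize (Node l r) = Suc (rsize l + rsize r)"

fun postorder :: "rtree \<Rightarrow> rtree list" where
  "postorder LeftLeaf = [LeftLeaf]"
| "postorder (Ptr k) = [Ptr k]"
| "postorder (Node l r) = postorder l @ postorder r @ [Node l r]"

fun is_ptr :: "rtree \<Rightarrow> bool" where
  "is_ptr (Ptr k) = True"
| "is_ptr _ = False"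

fun no_leftleaf :: "rtree \<Rightarrow> bool" where
  "no_leftleaf LeftLeaf = False"
| "no_leftleaf (Ptr k) = True"
| "no_leftleaf (Node l r) = (no_leftleaf l \<and> no_leftleaf r)"

fun leaves_ok :: "rtree \<Rightarrow> bool" where
  "leaves_ok LeftLeaf = True"
| "leaves_ok (Ptr k) = False"
| "leaves_ok (Node l r) = (leaves_ok l \<and> no_leftleaf r)"

definition pointers_ok :: "rtree \<Rightarrow> bool" where
  "pointers_ok t \<longleftrightarrow> (\<forall>i < length (postorder t). \<forall>k. postorder t ! i = Ptr k \<longrightarrow>
      k < i \<and> \<not> is_ptr (postorder t ! k))"

definition relaxed :: "rtree \<Rightarrow> bool" where
  "relaxed t \<longleftrightarrow> leaves_ok t \<and> pointers_ok t"

text \<open>expand t env appends to env, in postorder, the unfolded binary trees of all nodes of t;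
  for a vertex u this is B(u), for a pointer leaf it is B of its target.\<close>
fun expand :: "rtree \<Rightarrow> btree list \<Rightarrow> btree list" where
  "expand LeftLeaf env = env @ [Lf]"
| "expand (Ptr k) env = env @ [env ! k]"
| "expand (Node l r) env =
     (let e1 = expand l env; e2 = expand r e1 in e2 @ [Nd (last e1) (last e2)])"

definition Bof :: "rtree \<Rightarrow> nat \<Rightarrow> btree" where
  "Bof t i = expand t [] ! i"

definition vertices :: "rtree \<Rightarrow> nat set" where
  "vertices t = {i. i < length (postorder t) \<and> \<not> is_ptr (postorder t ! i)}"

definition compacted :: "rtree \<Rightarrow> bool" where
  "compacted t \<longleftrightarrow> relaxed t \<and> inj_on (Bof t) (vertices t)"

end

theory Submission
  imports Defs
begin

text \<open>Appending a step to a C-decorated path ending at \<open>(n - 1, m)\<close> or \<open>(n, m - 1)\<close>: an \<open>H\<close> step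
  may carry any of the \<open>m + 1\<close> decorations, and a \<open>V\<close> step is forbidden only when the path ends
  with two \<open>H\<close> steps whose decoration pair is the pair of an earlier \<open>V\<close> step. The pairs of the
  \<open>V\<close> steps of a C-decorated path are pairwise distinct, so the forbidden extensions are counted by
  C-decorated paths ending at \<open>(n - 2, m - 1)\<close> together with one of their \<open>m - 1\<close> pairs.

  For the trees, read a relaxed tree in postorder, skipping the left-most leaf: a pointer becomes an
  \<open>H\<close> step decorated with the rank of its target among the vertices, an internal node a \<open>V\<close> step.
  After a prefix one holds a forest of relaxed trees whose roots sit on the diagonals \<open>x - y\<close> of
  the path, so the labels \<open>v\<^sub>1\<close> and \<open>v\<^sub>2\<close> of a new \<open>V\<close> step are the ranks of the two children
  of the new node. This is a bijection between relaxed trees of size \<open>n\<close> and horizontally decorated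
  paths ending at \<open>(n, n)\<close>, and the trees \<open>B(u)\<close> of the vertices are pairwise distinct exactly when
  the pairs are, i.e. when the path is C-decorated.\<close>

lemma xcoord_simps [simp]:
  "xcoord [] = 0" "xcoord (xs @ ys) = xcoord xs + xcoord ys"
  "xcoord (H d # xs) = Suc (xcoord xs)" "xcoord (V # xs) = xcoord xs"
  by (auto simp: xcoord_def)

lemma ycoord_simps [simp]:
  "ycoord [] = 0" "ycoord (xs @ ys) = ycoord xs + ycoord ys"
  "ycoord (H d # xs) = ycoord xs" "ycoord (V # xs) = Suc (ycoord xs)"
  by (auto simp: ycoord_def)

lemma length_eq_xcoord_add_ycoord: "length xs = xcoord xs + ycoord xs"
  by (induction xs) (auto simp: xcoord_def ycoord_def)

lemma ycoord_take_mono: "i \<le> j \<Longrightarrow> ycoord (take i xs) \<le> ycoord (take j xs)"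
  by (metis le_add1 le_add_diff_inverse take_add ycoord_simps(2))

lemma ycoord_take_le: "ycoord (take i xs) \<le> ycoord xs"
  by (metis append_take_drop_id le_add1 ycoord_simps(2))

definition admissible_step :: "step list \<Rightarrow> step \<Rightarrow> bool" where
  "admissible_step xs s \<longleftrightarrow>
     (case s of H d \<Rightarrow> 1 \<le> d \<and> d \<le> ycoord xs + 1 | V \<Rightarrow> ycoord xs < xcoord xs)"

lemma hdec_path_Nil [simp]: "hdec_path []"
  by (simp add: hdec_path_def)

lemma hdec_path_snoc_unfolded:
  "hdec_path (xs @ [s]) \<longleftrightarrow> hdec_path xs \<and> ycoord (xs @ [s]) \<le> xcoord (xs @ [s]) \<and>
     (\<forall>d. s = H d \<longrightarrow> 1 \<le> d \<and> d \<le> ycoord xs + 1)"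
  unfolding hdec_path_def by (auto simp: less_Suc_eq nth_append)

lemma hdec_path_ycoord_le_xcoord: "hdec_path xs \<Longrightarrow> ycoord xs \<le> xcoord xs"
  by (cases xs rule: rev_exhaust) (auto simp: hdec_path_snoc_unfolded)

lemma hdec_path_snoc: "hdec_path (xs @ [s]) \<longleftrightarrow> hdec_path xs \<and> admissible_step xs s"
  using hdec_path_ycoord_le_xcoord[of xs]
  by (cases s) (auto simp: hdec_path_snoc_unfolded admissible_step_def)

lemma hdec_path_appendD: "hdec_path (xs @ ys) \<Longrightarrow> hdec_path xs"
  by (induction ys rule: rev_induct) (auto simp: hdec_path_snoc simp flip: append_assoc)

lemma hdec_path_decoration_bounds:
  "hdec_path xs \<Longrightarrow> i < length xs \<Longrightarrow> xs ! i = H d \<Longrightarrow> 1 \<le> d \<and> d \<le> ycoord (take i xs) + 1"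
  by (simp add: hdec_path_def)

lemma hdec_path_first_not_V: "hdec_path xs \<Longrightarrow> xs \<noteq> [] \<Longrightarrow> xs ! 0 \<noteq> V"
  by (cases xs) (auto simp: hdec_path_def)

lemma step_label_append: "j < length xs \<Longrightarrow> step_label (xs @ ys) j = step_label xs j"
  by (cases "xs ! j") (auto simp: step_label_def nth_append)

lemma diag_append: "j < length xs \<Longrightarrow> diag (xs @ ys) j = diag xs j"
  by (simp add: diag_def)

lemma v2_append: "i < length xs \<Longrightarrow> v2 (xs @ ys) i = v2 xs i"
  by (simp add: v2_def step_label_append)

lemma v1_append:
  assumes "i < length xs"
  shows "v1 (xs @ ys) i = v1 xs i"
proof -
  let ?S = "{j. j < i \<and> diag xs j = diag xs i}"
  have "{j. j < i \<and> diag (xs @ ys) j = diag (xs @ ys) i} = ?S"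
    using assms by (auto simp: diag_append)
  moreover have "?S \<noteq> {} \<Longrightarrow> Max ?S < i"
    by (subst Max_less_iff) auto
  ultimately show ?thesis
    using assms by (auto simp: v1_def Let_def step_label_append)
qed

lemma step_label_bounds:
  assumes "hdec_path xs" "j < length xs"
  shows "1 \<le> step_label xs j \<and> step_label xs j \<le> ycoord (take (Suc j) xs) + 1"
proof (cases "xs ! j")
  case (H d)
  moreover have "ycoord (take j xs) \<le> ycoord (take (Suc j) xs)"
    by (rule ycoord_take_mono) simp
  ultimately show ?thesis
    using hdec_path_decoration_bounds[OF assms] by (auto simp: step_label_def)
qed (simp add: step_label_def)

lemma step_label_le_ycoord: "hdec_path xs \<Longrightarrow> j < length xs \<Longrightarrow> step_label xs j \<le> ycoord xs + 1"
  using step_label_bounds ycoord_take_le by (meson add_le_mono1 le_trans)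

lemma step_label_V: "q < length xs \<Longrightarrow> xs ! q = V \<Longrightarrow> step_label xs q = ycoord (take q xs) + 2"
  by (simp add: step_label_def take_Suc_conv_app_nth)

lemma step_label_less_V:
  assumes "hdec_path xs" "j < q" "q < length xs" "xs ! q = V"
  shows "step_label xs j < step_label xs q"
proof -
  have "step_label xs j \<le> ycoord (take (Suc j) xs) + 1"
    using step_label_bounds assms by auto
  moreover have "ycoord (take (Suc j) xs) \<le> ycoord (take q xs)"
    using assms by (intro ycoord_take_mono) simp
  ultimately show ?thesis
    using step_label_V assms by simp
qed

lemma v1_cases: "v1 xs i = 1 \<or> (\<exists>j<i. v1 xs i = step_label xs j)"
proof (cases "{j. j < i \<and> diag xs j = diag xs i} = {}")
  case False
  then have "Max {j. j < i \<and> diag xs j = diag xs i} \<in> {j. j < i \<and> diag xs j = diag xs i}"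
    by (intro Max_in) auto
  moreover have "v1 xs i = step_label xs (Max {j. j < i \<and> diag xs j = diag xs i})"
    unfolding v1_def Let_def by (rule if_not_P[OF False])
  ultimately show ?thesis by blast
qed (simp add: v1_def)

lemma v1_bounds:
  assumes "hdec_path xs" "i \<le> length xs"
  shows "1 \<le> v1 xs i \<and> v1 xs i \<le> ycoord xs + 1"
proof -
  have "1 \<le> step_label xs j \<and> step_label xs j \<le> ycoord xs + 1" if "j < i" for j
    using that assms step_label_bounds step_label_le_ycoord by simp
  then show ?thesis
    using v1_cases[of xs i] by auto
qed

lemma v2_bounds:
  "hdec_path xs \<Longrightarrow> 0 < i \<Longrightarrow> i \<le> length xs \<Longrightarrow> 1 \<le> v2 xs i \<and> v2 xs i \<le> ycoord xs + 1"
  unfolding v2_def using step_label_le_ycoord step_label_bounds by simp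

lemma v2_snoc_V: "xs \<noteq> [] \<Longrightarrow> v2 (xs @ [V]) (length xs) = step_label xs (length xs - 1)"
  by (simp add: v2_def step_label_append)

lemma v1_after_two_steps:
  "v1 (ys @ [a, H h, V]) (length ys + 2) = step_label (ys @ [a, H h]) (length ys)"
proof -
  let ?xs = "ys @ [a, H h, V]"
  let ?S = "{j. j < length ys + 2 \<and> diag ?xs j = diag ?xs (length ys + 2)}"
  have "diag ?xs (length ys + 2) = diag ?xs (length ys)"
    "diag ?xs (length ys + 1) \<noteq> diag ?xs (length ys + 2)"
    unfolding diag_def by (cases a; simp add: take_Suc_conv_app_nth nth_append)+
  then have "length ys \<in> ?S" "Max ?S = length ys"
    by (auto intro!: Max_eqI simp: less_Suc_eq numeral_2_eq_2)
  then have "v1 ?xs (length ys + 2) = step_label ?xs (length ys)"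
    unfolding v1_def Let_def by auto
  then show ?thesis
    using step_label_append[of "length ys" "ys @ [a, H h]" "[V]"] by simp
qed

definition vpair :: "step list \<Rightarrow> nat \<Rightarrow> nat \<times> nat" where
  "vpair xs i = (v1 xs i, v2 xs i)"

lemma vpair_append: "i < length xs \<Longrightarrow> vpair (xs @ ys) i = vpair xs i"
  by (simp add: vpair_def v1_append v2_append)

definition V_positions :: "step list \<Rightarrow> nat set" where
  "V_positions xs = {i. i < length xs \<and> xs ! i = V}"

definition vpairs :: "step list \<Rightarrow> (nat \<times> nat) set" where
  "vpairs xs = vpair xs ` V_positions xs"

lemma V_positions_gt_0: "hdec_path xs \<Longrightarrow> i \<in> V_positions xs \<Longrightarrow> 0 < i"
  using hdec_path_first_not_V by (cases i) (auto simp: V_positions_def)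

lemma V_positions_append_HH:
  "V_positions (ys @ [H h1, H h2]) = V_positions ys"
  by (auto simp: V_positions_def nth_append less_Suc_eq)

lemma vpair_snoc_V_after_HH: "vpair (ys @ [H h1, H h2, V]) (length ys + 2) = (h1, h2)"
  using v1_after_two_steps[of ys "H h1" h2] v2_snoc_V[of "ys @ [H h1, H h2]"]
  by (simp add: vpair_def step_label_def nth_append)

text \<open>Unless the path ends with two horizontal steps, the new pair contains the label of the last
  vertical step, which exceeds every label occurring in an earlier pair.\<close>
lemma vpair_snoc_V_fresh:
  assumes hdec: "hdec_path xs" and not_HH: "\<nexists>ys h1 h2. xs = ys @ [H h1, H h2]"
    and i: "i \<in> V_positions xs"
  shows "vpair (xs @ [V]) (length xs) \<noteq> vpair xs i"
proof -
  have "xs \<noteq> []" using i by (auto simp: V_positions_def)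
  then obtain zs s where xs: "xs = zs @ [s]" by (metis rev_exhaust)
  show ?thesis
  proof (cases s)
    case V
    have "0 < i" using V_positions_gt_0[OF hdec i] .
    then have "step_label xs (i - 1) < step_label xs (length xs - 1)"
      using step_label_less_V[OF hdec, of "i - 1" "length xs - 1"] i xs V
      by (auto simp: V_positions_def)
    then show ?thesis
      using v2_snoc_V[OF \<open>xs \<noteq> []\<close>] by (simp add: vpair_def v2_def)
  next
    case (H h)
    have "i < length zs" using i xs H by (auto simp: V_positions_def nth_append less_Suc_eq)
    then obtain ys t where "zs = ys @ [t]"
      by (cases zs rule: rev_exhaust) auto
    moreover have "t = V"
      using not_HH xs H calculation by (cases t) auto
    ultimately have zs: "zs = ys @ [V]" by simp
    have last_V: "length ys < length xs" "xs ! length ys = V" using xs zs by simp_all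
    have "v1 xs i < step_label xs (length ys)"
    proof (cases "v1 xs i = 1")
      case True
      then show ?thesis using step_label_V[OF last_V] by simp
    next
      case False
      then obtain j where "j < i" "v1 xs i = step_label xs j" using v1_cases by blast
      then show ?thesis
        using step_label_less_V[OF hdec _ last_V] \<open>i < length zs\<close> zs by simp
    qed
    moreover have "v1 (xs @ [V]) (length xs) = step_label xs (length ys)"
      using v1_after_two_steps[of ys V h] xs zs H by (simp add: numeral_2_eq_2)
    ultimately show ?thesis by (simp add: vpair_def)
  qed
qed

lemma vpair_bounds:
  assumes "hdec_path xs" "i \<in> V_positions xs"
  shows "1 \<le> v1 xs i \<and> v1 xs i \<le> ycoord xs + 1" "1 \<le> v2 xs i \<and> v2 xs i \<le> ycoord xs + 1"
  using v1_bounds[OF assms(1), of i] v2_bounds[OF assms(1), of i] V_positions_gt_0[OF assms] assms(2)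
  by (auto simp: V_positions_def)

definition V_allowed :: "step list \<Rightarrow> bool" where
  "V_allowed xs \<longleftrightarrow> (\<forall>j h1 h2. j + 2 = length xs \<longrightarrow> xs ! j = H h1 \<longrightarrow> xs ! (j + 1) = H h2 \<longrightarrow>
     (\<forall>i < j. xs ! i = V \<longrightarrow> (h1, h2) \<noteq> vpair xs i))"

lemma V_allowed_append_HH:
  "V_allowed (ys @ [H h1, H h2]) \<longleftrightarrow> (h1, h2) \<notin> vpairs ys"
  by (auto simp: V_allowed_def vpairs_def V_positions_def nth_append vpair_append)

lemma take_append_last_two: "length xs = j + 2 \<Longrightarrow> xs = take j xs @ [xs ! j, xs ! (j + 1)]"
  by (metis Cons_nth_drop_Suc Suc_eq_plus1 append_take_drop_id drop_all lessI less_add_Suc1 le_refl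
      add_2_eq_Suc')

lemma V_allowed_if_not_HH:
  assumes "\<nexists>ys h1 h2. xs = ys @ [H h1, H h2]"
  shows "V_allowed xs"
  unfolding V_allowed_def
proof (intro allI impI)
  fix j h1 h2 i
  assume "j + 2 = length xs" "xs ! j = H h1" "xs ! (j + 1) = H h2"
  then have "xs = take j xs @ [H h1, H h2]"
    using take_append_last_two[of xs j] by simp
  with assms show "(h1, h2) \<noteq> vpair xs i" by blast
qed

lemma C_decorated_snoc:
  "C_decorated (xs @ [s]) \<longleftrightarrow> C_decorated xs \<and> admissible_step xs s \<and> (s = V \<longrightarrow> V_allowed xs)"
proof -
  let ?P = "\<lambda>zs. \<forall>j h1 h2. j + 2 < length zs \<longrightarrow> zs ! j = H h1 \<longrightarrow> zs ! (j + 1) = H h2 \<longrightarrow>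
        zs ! (j + 2) = V \<longrightarrow> (\<forall>i < j. zs ! i = V \<longrightarrow> (h1, h2) \<noteq> (v1 zs i, v2 zs i))"
  have "?P (xs @ [s]) \<longleftrightarrow> ?P xs \<and> (s = V \<longrightarrow> V_allowed xs)"
  proof
    assume a: "?P (xs @ [s])"
    have "?P xs"
    proof (intro allI impI)
      fix j h1 h2 i
      assume "j + 2 < length xs" "xs ! j = H h1" "xs ! (j + 1) = H h2" "xs ! (j + 2) = V"
        "i < j" "xs ! i = V"
      then show "(h1, h2) \<noteq> (v1 xs i, v2 xs i)"
        using a[rule_format, of j h1 h2 i] by (auto simp: nth_append v1_append v2_append)
    qed
    moreover have "V_allowed xs" if "s = V"
      unfolding V_allowed_def vpair_def
    proof (intro allI impI)
      fix j h1 h2 i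
      assume "j + 2 = length xs" "xs ! j = H h1" "xs ! (j + 1) = H h2" "i < j" "xs ! i = V"
      then show "(h1, h2) \<noteq> (v1 xs i, v2 xs i)"
        using a[rule_format, of j h1 h2 i] that by (auto simp: nth_append v1_append v2_append)
    qed
    ultimately show "?P xs \<and> (s = V \<longrightarrow> V_allowed xs)" by blast
  next
    assume a: "?P xs \<and> (s = V \<longrightarrow> V_allowed xs)"
    show "?P (xs @ [s])"
    proof (intro allI impI)
      fix j h1 h2 i
      assume j: "j + 2 < length (xs @ [s])"
        and e: "(xs @ [s]) ! j = H h1" "(xs @ [s]) ! (j + 1) = H h2" "(xs @ [s]) ! (j + 2) = V"
        and i: "i < j" "(xs @ [s]) ! i = V"
      show "(h1, h2) \<noteq> (v1 (xs @ [s]) i, v2 (xs @ [s]) i)"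
      proof (cases "j + 2 < length xs")
        case True
        then show ?thesis using a e i by (auto simp: nth_append v1_append v2_append)
      next
        case False
        then have "j + 2 = length xs" using j by simp
        then show ?thesis
          using a e i unfolding V_allowed_def vpair_def
          by (auto simp: nth_append v1_append v2_append)
      qed
    qed
  qed
  then show ?thesis unfolding C_decorated_def by (auto simp: hdec_path_snoc)
qed

lemma C_decorated_Nil [simp]: "C_decorated []"
  by (simp add: C_decorated_def)

lemma C_decorated_appendD: "C_decorated (xs @ ys) \<Longrightarrow> C_decorated xs"
  by (induction ys rule: rev_induct) (auto simp: C_decorated_snoc simp flip: append_assoc)

lemma C_decorated_hdec_path: "C_decorated xs \<Longrightarrow> hdec_path xs"
  by (simp add: C_decorated_def)

lemma vpair_snoc_V_repeats_iff:
  assumes "hdec_path xs"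
  shows "vpair (xs @ [V]) (length xs) \<in> vpairs xs \<longleftrightarrow> \<not> V_allowed xs"
proof (cases "\<exists>ys h1 h2. xs = ys @ [H h1, H h2]")
  case True
  then obtain ys h1 h2 where xs: "xs = ys @ [H h1, H h2]" by blast
  have "vpairs xs = vpairs ys"
    unfolding xs vpairs_def V_positions_append_HH
    by (intro image_cong) (auto simp: V_positions_def vpair_append)
  then show ?thesis
    using vpair_snoc_V_after_HH[of ys h1 h2] V_allowed_append_HH[of ys h1 h2] xs by simp
next
  case False
  then show ?thesis
    using vpair_snoc_V_fresh[OF assms] V_allowed_if_not_HH by (auto simp: vpairs_def)
qed

lemma C_decorated_inj_on_vpair:
  assumes "C_decorated xs"
  shows "inj_on (vpair xs) (V_positions xs)"
proof -
  have "vpair xs a \<noteq> vpair xs b" if ab: "a < b" "a \<in> V_positions xs" "b \<in> V_positions xs" for a b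
  proof -
    let ?ys = "take b xs"
    have b: "b < length xs" "xs ! b = V" using ab by (auto simp: V_positions_def)
    then have xs: "xs = (?ys @ [V]) @ drop (Suc b) xs"
      using id_take_nth_drop[of b xs] by simp
    then have "C_decorated (?ys @ [V])"
      using assms C_decorated_appendD by metis
    then have "vpair (?ys @ [V]) (length ?ys) \<notin> vpairs ?ys"
      using vpair_snoc_V_repeats_iff C_decorated_hdec_path C_decorated_snoc by blast
    moreover have "vpair ?ys a \<in> vpairs ?ys"
      using ab b by (auto simp: vpairs_def V_positions_def)
    moreover have "vpair xs b = vpair (?ys @ [V]) (length ?ys)"
      using vpair_append[of "length ?ys" "?ys @ [V]" "drop (Suc b) xs"] xs b by simp
    moreover have "vpair xs a = vpair ?ys a"
      using vpair_append[of a ?ys "drop b xs"] ab b by simp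
    ultimately show ?thesis by metis
  qed
  then show ?thesis
    by (intro inj_onI) (metis linorder_neqE_nat)
qed

lemma card_vpairs:
  assumes "C_decorated xs"
  shows "card (vpairs xs) = ycoord xs"
proof -
  have "card (vpairs xs) = card (V_positions xs)"
    unfolding vpairs_def using C_decorated_inj_on_vpair[OF assms] by (rule card_image)
  also have "\<dots> = ycoord xs"
    by (simp add: V_positions_def ycoord_def length_filter_conv_card)
  finally show ?thesis .
qed

section \<open>The recurrence\<close>

definition C_paths :: "nat \<Rightarrow> nat \<Rightarrow> step list set" where
  "C_paths n m = {xs. C_decorated xs \<and> xcoord xs = n \<and> ycoord xs = m}"

lemma cnum_eq_card_C_paths: "cnum n m = card (C_paths n m)"
  by (simp add: cnum_def C_paths_def)

lemma hdec_path_decoration_in_set: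
  assumes "hdec_path xs" "H d \<in> set xs"
  shows "1 \<le> d \<and> d \<le> ycoord xs + 1"
proof -
  obtain i where "i < length xs" "xs ! i = H d"
    using assms(2) by (metis in_set_conv_nth)
  then show ?thesis
    using hdec_path_decoration_bounds[OF assms(1)] ycoord_take_le[of i xs] by fastforce
qed

lemma finite_C_paths: "finite (C_paths n m)"
proof (rule finite_subset)
  show "C_paths n m \<subseteq> {xs. set xs \<subseteq> insert V (H ` {..m + 1}) \<and> length xs = n + m}"
  proof safe
    fix xs s
    assume xs: "xs \<in> C_paths n m" and "s \<in> set xs" "s \<notin> H ` {..m + 1}"
    then show "s = V"
      using hdec_path_decoration_in_set[of xs] C_decorated_hdec_path
      by (cases s) (auto simp: C_paths_def)
  qed (simp add: C_paths_def length_eq_xcoord_add_ycoord)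
qed (rule finite_lists_length_eq, simp)

lemma C_paths_eq_empty: "n < m \<Longrightarrow> C_paths n m = {}"
  using hdec_path_ycoord_le_xcoord C_decorated_hdec_path by (fastforce simp: C_paths_def)

lemma C_decorated_replicate: "C_decorated (replicate n (H 1))"
proof (induction n)
  case (Suc n)
  then show ?case
    by (simp add: C_decorated_snoc admissible_step_def flip: replicate_append_same)
qed simp

lemma C_paths_0: "C_paths n 0 = {replicate n (H 1)}"
proof
  have "xcoord (replicate n (H 1)) = n" "ycoord (replicate n (H 1)) = 0"
    by (induction n) auto
  then show "{replicate n (H 1)} \<subseteq> C_paths n 0"
    using C_decorated_replicate by (simp add: C_paths_def)
next
  show "C_paths n 0 \<subseteq> {replicate n (H 1)}"
  proof
    fix xs assume xs: "xs \<in> C_paths n 0"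
    then have hdec: "hdec_path xs" and y: "ycoord xs = 0"
      by (auto simp: C_paths_def C_decorated_hdec_path)
    have "s = H 1" if "s \<in> set xs" for s
    proof (cases s)
      case (H d)
      then show ?thesis using hdec_path_decoration_in_set[OF hdec] that y by fastforce
    next
      case V
      then show ?thesis using that y by (auto simp: ycoord_def filter_empty_conv)
    qed
    moreover have "length xs = n"
      using xs length_eq_xcoord_add_ycoord[of xs] by (simp add: C_paths_def)
    ultimately show "xs \<in> {replicate n (H 1)}"
      by (simp add: replicate_eqI)
  qed
qed

definition blocked_paths :: "nat \<Rightarrow> nat \<Rightarrow> step list set" where
  "blocked_paths n m = {xs \<in> C_paths n m. \<not> V_allowed xs}"

lemma blocked_paths_eq_image:
  "blocked_paths (n + 2) m =
     (\<lambda>(xs, h1, h2). xs @ [H h1, H h2]) ` (SIGMA xs:C_paths n m. vpairs xs)"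
proof
  show "blocked_paths (n + 2) m \<subseteq>
      (\<lambda>(xs, h1, h2). xs @ [H h1, H h2]) ` (SIGMA xs:C_paths n m. vpairs xs)"
  proof
    fix zs assume zs: "zs \<in> blocked_paths (n + 2) m"
    then have "\<not> V_allowed zs" by (simp add: blocked_paths_def)
    then obtain xs h1 h2 where xs: "zs = xs @ [H h1, H h2]"
      using V_allowed_if_not_HH by blast
    then have "xs \<in> C_paths n m" "(h1, h2) \<in> vpairs xs"
      using zs C_decorated_appendD[of xs] V_allowed_append_HH[of xs]
      by (auto simp: blocked_paths_def C_paths_def)
    then show "zs \<in> (\<lambda>(xs, h1, h2). xs @ [H h1, H h2]) ` (SIGMA xs:C_paths n m. vpairs xs)"
      using xs by force
  qed
next
  show "(\<lambda>(xs, h1, h2). xs @ [H h1, H h2]) ` (SIGMA xs:C_paths n m. vpairs xs) \<subseteq>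
      blocked_paths (n + 2) m"
  proof clarify
    fix xs h1 h2 assume xs: "xs \<in> C_paths n m" and h: "(h1, h2) \<in> vpairs xs"
    then have C: "C_decorated xs" and hdec: "hdec_path xs"
      by (auto simp: C_paths_def C_decorated_hdec_path)
    obtain i where "i \<in> V_positions xs" "(h1, h2) = vpair xs i"
      using h by (auto simp: vpairs_def)
    then have "1 \<le> h1 \<and> h1 \<le> ycoord xs + 1" "1 \<le> h2 \<and> h2 \<le> ycoord xs + 1"
      using vpair_bounds[OF hdec] by (auto simp: vpair_def)
    then have "C_decorated (xs @ [H h1, H h2])"
      using C C_decorated_snoc[of xs] C_decorated_snoc[of "xs @ [H h1]"]
      by (simp add: admissible_step_def)
    then show "xs @ [H h1, H h2] \<in> blocked_paths (n + 2) m"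
      using xs h V_allowed_append_HH[of xs] by (simp add: blocked_paths_def C_paths_def)
  qed
qed

lemma card_blocked_paths: "card (blocked_paths (n + 2) m) = m * cnum n m"
proof -
  have "inj_on (\<lambda>(xs, h1, h2). xs @ [H h1, H h2]) (SIGMA xs:C_paths n m. vpairs xs)"
    by (rule inj_onI) (auto simp: append_eq_append_conv)
  then have "card (blocked_paths (n + 2) m) = card (SIGMA xs:C_paths n m. vpairs xs)"
    unfolding blocked_paths_eq_image by (rule card_image)
  also have "\<dots> = (\<Sum>xs\<in>C_paths n m. card (vpairs xs))"
    by (rule card_SigmaI) (auto simp: finite_C_paths vpairs_def V_positions_def)
  also have "\<dots> = (\<Sum>xs\<in>C_paths n m. m)"
    by (rule sum.cong) (auto simp: C_paths_def card_vpairs)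
  finally show ?thesis
    by (simp add: cnum_eq_card_C_paths)
qed

lemma blocked_paths_short:
  assumes "n < 2"
  shows "blocked_paths n m = {}"
proof -
  have "2 \<le> xcoord xs" if blocked: "\<not> V_allowed xs" for xs
  proof -
    obtain ys h1 h2 where "xs = ys @ [H h1, H h2]"
      using V_allowed_if_not_HH blocked by blast
    then show ?thesis by simp
  qed
  then show ?thesis
    using assms by (fastforce simp: blocked_paths_def C_paths_def)
qed

lemma C_paths_decomp:
  assumes "1 \<le> m" "m \<le> n"
  shows "C_paths n m = (\<lambda>xs. xs @ [V]) ` {xs \<in> C_paths n (m - 1). V_allowed xs}
                     \<union> (\<lambda>(xs, d). xs @ [H d]) ` (C_paths (n - 1) m \<times> {1..m + 1})"
proof
  show "C_paths n m \<subseteq> (\<lambda>xs. xs @ [V]) ` {xs \<in> C_paths n (m - 1). V_allowed xs}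
                     \<union> (\<lambda>(xs, d). xs @ [H d]) ` (C_paths (n - 1) m \<times> {1..m + 1})"
  proof
    fix zs assume zs: "zs \<in> C_paths n m"
    then have "zs \<noteq> []" using assms by (auto simp: C_paths_def)
    then obtain xs s where xs: "zs = xs @ [s]" by (metis rev_exhaust)
    show "zs \<in> (\<lambda>xs. xs @ [V]) ` {xs \<in> C_paths n (m - 1). V_allowed xs}
                     \<union> (\<lambda>(xs, d). xs @ [H d]) ` (C_paths (n - 1) m \<times> {1..m + 1})"
    proof (cases s)
      case V
      then show ?thesis
        using zs xs by (auto simp: C_paths_def C_decorated_snoc)
    next
      case (H d)
      then have "(xs, d) \<in> C_paths (n - 1) m \<times> {1..m + 1}"
        using zs xs by (auto simp: C_paths_def C_decorated_snoc admissible_step_def)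
      then show ?thesis using xs H by force
    qed
  qed
  show "(\<lambda>xs. xs @ [V]) ` {xs \<in> C_paths n (m - 1). V_allowed xs}
                     \<union> (\<lambda>(xs, d). xs @ [H d]) ` (C_paths (n - 1) m \<times> {1..m + 1}) \<subseteq> C_paths n m"
    using assms by (auto simp: C_paths_def C_decorated_snoc admissible_step_def)
qed

lemma cnum_recurrence:
  assumes "1 \<le> m" "m \<le> n"
  shows "int (cnum n m) = int (cnum n (m - 1)) + int (m + 1) * int (cnum (n - 1) m)
                          - int (m - 1) * int (cnum (n - 2) (m - 1))"
proof -
  let ?allowed = "{xs \<in> C_paths n (m - 1). V_allowed xs}"
  have "card ((\<lambda>(xs, d). xs @ [H d]) ` (C_paths (n - 1) m \<times> {1..m + 1})) = (m + 1) * cnum (n - 1) m"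
    by (subst card_image) (auto simp: inj_on_def card_cartesian_product cnum_eq_card_C_paths)
  then have V_or_H: "cnum n m = card ?allowed + (m + 1) * cnum (n - 1) m"
    unfolding cnum_eq_card_C_paths C_paths_decomp[OF assms]
    by (subst card_Un_disjoint) (auto simp: finite_C_paths card_image inj_on_def)
  have "cnum n (m - 1) = card ?allowed + card (blocked_paths n (m - 1))"
    unfolding cnum_eq_card_C_paths blocked_paths_def
    by (subst card_Un_disjoint[symmetric]) (auto simp: finite_C_paths intro: arg_cong[where f = card])
  moreover have "card (blocked_paths n (m - 1)) = (m - 1) * cnum (n - 2) (m - 1)"
  proof (cases "2 \<le> n")
    case True
    then obtain k where "n = k + 2" by (metis add.commute le_Suc_ex)
    then show ?thesis using card_blocked_paths[of k "m - 1"] by simp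
  next
    case False
    then show ?thesis using blocked_paths_short assms by simp
  qed
  ultimately have allowed_or_blocked:
      "cnum n (m - 1) = card ?allowed + (m - 1) * cnum (n - 2) (m - 1)"
    by simp
  show ?thesis
    unfolding V_or_H allowed_or_blocked of_nat_add of_nat_mult by linarith
qed

section \<open>The binary trees of a decorated path\<close>

text \<open>Entry \<open>\<ell> - 1\<close> of \<^term>\<open>path_trees xs\<close> is the binary tree \<open>B(u)\<close> of the vertex \<open>u\<close> of
  label \<open>\<ell>\<close>: the left-most leaf has label 1, and a vertical step creates the next vertex, whose
  children are the vertices labelled \<open>v\<^sub>1\<close> and \<open>v\<^sub>2\<close>.\<close>
fun rev_path_trees :: "step list \<Rightarrow> btree list" where
  "rev_path_trees [] = [Lf]"
| "rev_path_trees (H d # rs) = rev_path_trees rs"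
| "rev_path_trees (V # rs) =
     (let ts = rev_path_trees rs; xs = rev rs @ [V]
      in ts @ [Nd (ts ! (v1 xs (length rs) - 1)) (ts ! (v2 xs (length rs) - 1))])"

definition path_trees :: "step list \<Rightarrow> btree list" where
  "path_trees xs = rev_path_trees (rev xs)"

lemma path_trees_Nil [simp]: "path_trees [] = [Lf]"
  by (simp add: path_trees_def)

lemma path_trees_snoc_H [simp]: "path_trees (xs @ [H d]) = path_trees xs"
  by (simp add: path_trees_def)

lemma path_trees_snoc_V [simp]:
  "path_trees (xs @ [V]) = path_trees xs @
     [Nd (path_trees xs ! (v1 (xs @ [V]) (length xs) - 1))
         (path_trees xs ! (v2 (xs @ [V]) (length xs) - 1))]"
  by (simp add: path_trees_def Let_def)

lemma length_path_trees [simp]: "length (path_trees xs) = ycoord xs + 1"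
proof (induction xs rule: rev_induct)
  case (snoc s xs)
  then show ?case by (cases s) auto
qed simp

lemma nth_path_trees_append:
  "k < length (path_trees xs) \<Longrightarrow> path_trees (xs @ ys) ! k = path_trees xs ! k"
proof (induction ys rule: rev_induct)
  case (snoc s ys)
  then show ?case
    by (cases s) (auto simp: nth_append simp flip: append_assoc)
qed simp

lemma v1_snoc_V_bounds:
  assumes "hdec_path xs"
  shows "1 \<le> v1 (xs @ [V]) (length xs) \<and> v1 (xs @ [V]) (length xs) \<le> ycoord xs + 1"
proof (cases "v1 (xs @ [V]) (length xs) = 1")
  case False
  then obtain j where "j < length xs" "v1 (xs @ [V]) (length xs) = step_label xs j"
    using v1_cases step_label_append by (metis order.strict_trans2 order_refl)
  then show ?thesis
    using step_label_bounds[OF assms] step_label_le_ycoord[OF assms] by simp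
qed simp

lemma v2_snoc_V_bounds:
  "hdec_path xs \<Longrightarrow> xs \<noteq> [] \<Longrightarrow> 1 \<le> v2 (xs @ [V]) (length xs) \<and> v2 (xs @ [V]) (length xs) \<le> ycoord xs + 1"
  using v2_snoc_V step_label_bounds step_label_le_ycoord by simp

definition vertex_tree :: "step list \<Rightarrow> nat \<Rightarrow> btree" where
  "vertex_tree xs i = Nd (path_trees xs ! (v1 xs i - 1)) (path_trees xs ! (v2 xs i - 1))"

lemma vertex_tree_append:
  assumes "hdec_path xs" "i \<in> V_positions xs"
  shows "vertex_tree (xs @ ys) i = vertex_tree xs i"
proof -
  have "v1 xs i - 1 < length (path_trees xs)" "v2 xs i - 1 < length (path_trees xs)"
    using vpair_bounds[OF assms] by auto
  then show ?thesis
    using assms(2)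
    by (simp add: vertex_tree_def v1_append v2_append nth_path_trees_append V_positions_def)
qed

lemma vertex_tree_snoc_V:
  assumes "hdec_path (xs @ [V])"
  shows "vertex_tree (xs @ [V]) (length xs) =
    Nd (path_trees xs ! (v1 (xs @ [V]) (length xs) - 1))
       (path_trees xs ! (v2 (xs @ [V]) (length xs) - 1))"
proof -
  have "xs \<noteq> []" and hdec: "hdec_path xs"
    using assms by (auto simp: hdec_path_snoc admissible_step_def)
  then have "v1 (xs @ [V]) (length xs) - 1 < length (path_trees xs)"
    "v2 (xs @ [V]) (length xs) - 1 < length (path_trees xs)"
    using v1_snoc_V_bounds[OF hdec] v2_snoc_V_bounds[OF hdec] by auto
  then show ?thesis
    by (simp add: vertex_tree_def nth_append del: length_path_trees)
qed

lemma path_trees_snoc_V_vertex_tree: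
  "hdec_path (xs @ [V]) \<Longrightarrow>
     path_trees (xs @ [V]) = path_trees xs @ [vertex_tree (xs @ [V]) (length xs)]"
  by (simp add: vertex_tree_snoc_V)

lemma set_path_trees:
  "hdec_path xs \<Longrightarrow> set (path_trees xs) = insert Lf (vertex_tree xs ` V_positions xs)"
proof (induction xs rule: rev_induct)
  case (snoc s xs)
  then have hdec: "hdec_path xs"
    using hdec_path_appendD by blast
  have old: "vertex_tree (xs @ [s]) ` V_positions xs = vertex_tree xs ` V_positions xs"
    using vertex_tree_append[OF hdec] by (intro image_cong) auto
  show ?case
  proof (cases s)
    case (H d)
    then have "V_positions (xs @ [s]) = V_positions xs"
      by (auto simp: V_positions_def nth_append less_Suc_eq)
    then show ?thesis using snoc.IH hdec old H by simp
  next
    case V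
    then have "V_positions (xs @ [s]) = insert (length xs) (V_positions xs)"
      by (auto simp: V_positions_def nth_append less_Suc_eq)
    then show ?thesis
      using snoc.IH hdec old V path_trees_snoc_V_vertex_tree snoc.prems
      by (auto simp del: path_trees_snoc_V)
  qed
qed (simp add: V_positions_def)

lemma vertex_tree_snoc_V_in_set_iff:
  assumes hdec: "hdec_path (xs @ [V])" and dist: "distinct (path_trees xs)"
  shows "vertex_tree (xs @ [V]) (length xs) \<in> set (path_trees xs) \<longleftrightarrow>
    vpair (xs @ [V]) (length xs) \<in> vpairs xs"
proof -
  let ?ts = "path_trees xs" and ?a = "v1 (xs @ [V]) (length xs)" and ?b = "v2 (xs @ [V]) (length xs)"
  have "xs \<noteq> []" and hdec': "hdec_path xs"
    using hdec by (auto simp: hdec_path_snoc admissible_step_def)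
  then have new: "1 \<le> ?a" "?a - 1 < length ?ts" "1 \<le> ?b" "?b - 1 < length ?ts"
    using v1_snoc_V_bounds[OF hdec'] v2_snoc_V_bounds[OF hdec'] by auto
  have "vertex_tree (xs @ [V]) (length xs) = vertex_tree xs i \<longleftrightarrow>
      vpair (xs @ [V]) (length xs) = vpair xs i" if i: "i \<in> V_positions xs" for i
  proof -
    have "1 \<le> v1 xs i" "v1 xs i - 1 < length ?ts" "1 \<le> v2 xs i" "v2 xs i - 1 < length ?ts"
      using vpair_bounds[OF hdec' i] by auto
    then show ?thesis
      using new dist vertex_tree_snoc_V[OF hdec]
      by (auto simp: vertex_tree_def vpair_def nth_eq_iff_index_eq)
  qed
  then show ?thesis
    using set_path_trees[OF hdec'] vertex_tree_snoc_V[OF hdec] by (auto simp: vpairs_def)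
qed

lemma distinct_path_trees_iff:
  "hdec_path xs \<Longrightarrow> distinct (path_trees xs) \<longleftrightarrow> C_decorated xs"
proof (induction xs rule: rev_induct)
  case (snoc s xs)
  then have hdec: "hdec_path xs" and adm: "admissible_step xs s"
    by (auto simp: hdec_path_snoc)
  show ?case
  proof (cases s)
    case (H d)
    then show ?thesis using snoc.IH hdec adm by (simp add: C_decorated_snoc)
  next
    case V
    then show ?thesis
      using snoc hdec adm path_trees_snoc_V_vertex_tree vertex_tree_snoc_V_in_set_iff
        vpair_snoc_V_repeats_iff[OF hdec]
      by (auto simp: C_decorated_snoc simp del: path_trees_snoc_V)
  qed
qed simp

section \<open>Reading relaxed trees in postorder\<close>

definition count_vertices :: "rtree list \<Rightarrow> nat" where
  "count_vertices ps = length (filter (\<lambda>p. \<not> is_ptr p) ps)"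

lemma count_vertices_simps [simp]:
  "count_vertices [] = 0" "count_vertices (ps @ qs) = count_vertices ps + count_vertices qs"
  "count_vertices [p] = (if is_ptr p then 0 else 1)"
  by (auto simp: count_vertices_def)

definition vertex_rank :: "rtree list \<Rightarrow> nat \<Rightarrow> nat" where
  "vertex_rank ps k = count_vertices (take (Suc k) ps)"

definition target_rank :: "rtree list \<Rightarrow> nat \<Rightarrow> nat" where
  "target_rank ps i = (case ps ! i of Ptr k \<Rightarrow> vertex_rank ps k | _ \<Rightarrow> vertex_rank ps i)"

definition backward_pointers :: "rtree list \<Rightarrow> bool" where
  "backward_pointers ps \<longleftrightarrow> (\<forall>i < length ps. \<forall>k. ps ! i = Ptr k \<longrightarrow> k < i \<and> \<not> is_ptr (ps ! k))"

definition vertex_positions :: "rtree list \<Rightarrow> nat set" where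
  "vertex_positions ps = {i. i < length ps \<and> \<not> is_ptr (ps ! i)}"

lemma vertex_rank_append: "k < length ps \<Longrightarrow> vertex_rank (ps @ qs) k = vertex_rank ps k"
  by (simp add: vertex_rank_def)

lemma vertex_rank_le: "vertex_rank ps k \<le> count_vertices ps"
  unfolding vertex_rank_def by (metis append_take_drop_id count_vertices_simps(2) le_add1)

lemma vertex_rank_pos: "k < length ps \<Longrightarrow> \<not> is_ptr (ps ! k) \<Longrightarrow> 1 \<le> vertex_rank ps k"
  by (simp add: vertex_rank_def take_Suc_conv_app_nth)

lemma vertex_rank_strict_mono:
  assumes "j < k" "k < length ps" "\<not> is_ptr (ps ! k)"
  shows "vertex_rank ps j < vertex_rank ps k"
proof -
  have "vertex_rank ps j \<le> count_vertices (take k ps)"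
    using vertex_rank_le[of "take k ps" j] assms by (simp add: vertex_rank_def min_def)
  then show ?thesis
    using assms by (simp add: vertex_rank_def take_Suc_conv_app_nth)
qed

lemma inj_on_vertex_rank: "inj_on (vertex_rank ps) (vertex_positions ps)"
proof (rule inj_onI)
  fix j k
  assume "j \<in> vertex_positions ps" "k \<in> vertex_positions ps" "vertex_rank ps j = vertex_rank ps k"
  then show "j = k"
    using vertex_rank_strict_mono[of j k ps] vertex_rank_strict_mono[of k j ps]
    by (cases j k rule: linorder_cases) (auto simp: vertex_positions_def)
qed

lemma vertex_rank_surj:
  "1 \<le> d \<Longrightarrow> d \<le> count_vertices ps \<Longrightarrow> \<exists>k \<in> vertex_positions ps. vertex_rank ps k = d"
proof (induction ps rule: rev_induct)
  case (snoc p ps)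
  show ?case
  proof (cases "d \<le> count_vertices ps")
    case True
    then obtain k where "k \<in> vertex_positions ps" "vertex_rank ps k = d"
      using snoc by blast
    then show ?thesis
      by (intro bexI[of _ k]) (auto simp: vertex_positions_def nth_append vertex_rank_append)
  next
    case False
    then have "d = count_vertices ps + 1" "\<not> is_ptr p"
      using snoc.prems by (auto split: if_splits)
    then show ?thesis
      by (intro bexI[of _ "length ps"]) (auto simp: vertex_rank_def vertex_positions_def)
  qed
qed simp

lemma bij_betw_vertex_rank:
  "bij_betw (\<lambda>k. vertex_rank ps k - 1) (vertex_positions ps) {..<count_vertices ps}"
proof (rule bij_betw_imageI)
  show "inj_on (\<lambda>k. vertex_rank ps k - 1) (vertex_positions ps)"
  proof (rule inj_onI)
    fix j k
    assume j: "j \<in> vertex_positions ps" and k: "k \<in> vertex_positions ps"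
      and "vertex_rank ps j - 1 = vertex_rank ps k - 1"
    then have "vertex_rank ps j = vertex_rank ps k"
      using vertex_rank_pos[of j ps] vertex_rank_pos[of k ps] by (simp add: vertex_positions_def)
    then show "j = k"
      by (rule inj_onD[OF inj_on_vertex_rank _ j k])
  qed
  show "(\<lambda>k. vertex_rank ps k - 1) ` vertex_positions ps = {..<count_vertices ps}"
  proof
    show "(\<lambda>k. vertex_rank ps k - 1) ` vertex_positions ps \<subseteq> {..<count_vertices ps}"
    proof clarify
      fix k assume "k \<in> vertex_positions ps"
      then show "vertex_rank ps k - 1 < count_vertices ps"
        using vertex_rank_pos[of k ps] vertex_rank_le[of ps k] by (simp add: vertex_positions_def)
    qed
    show "{..<count_vertices ps} \<subseteq> (\<lambda>k. vertex_rank ps k - 1) ` vertex_positions ps"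
    proof
      fix d assume "d \<in> {..<count_vertices ps}"
      then obtain k where "k \<in> vertex_positions ps" "vertex_rank ps k = d + 1"
        using vertex_rank_surj[of "d + 1" ps] by auto
      then show "d \<in> (\<lambda>k. vertex_rank ps k - 1) ` vertex_positions ps"
        using image_eqI[of d "\<lambda>k. vertex_rank ps k - 1" k] by simp
    qed
  qed
qed

lemma backward_pointers_appendD:
  assumes "backward_pointers (ps @ qs)"
  shows "backward_pointers ps"
  unfolding backward_pointers_def
proof (intro allI impI)
  fix i k assume i: "i < length ps" "ps ! i = Ptr k"
  then have "(ps @ qs) ! i = Ptr k" "i < length (ps @ qs)"
    by (simp_all add: nth_append)
  then have "k < i \<and> \<not> is_ptr ((ps @ qs) ! k)"
    using assms unfolding backward_pointers_def by blast
  with i show "k < i \<and> \<not> is_ptr (ps ! k)"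
    by (auto simp: nth_append)
qed

lemma backward_pointers_snoc_vertex:
  "backward_pointers ps \<Longrightarrow> \<not> is_ptr p \<Longrightarrow> backward_pointers (ps @ [p])"
  unfolding backward_pointers_def by (auto simp: nth_append less_Suc_eq)

lemma backward_pointers_snoc_Ptr_iff:
  "backward_pointers (ps @ [Ptr k]) \<longleftrightarrow> backward_pointers ps \<and> k \<in> vertex_positions ps"
  unfolding backward_pointers_def vertex_positions_def
  by (fastforce simp: nth_append less_Suc_eq)

lemma target_rank_append:
  "backward_pointers ps \<Longrightarrow> i < length ps \<Longrightarrow> target_rank (ps @ qs) i = target_rank ps i"
  unfolding target_rank_def backward_pointers_def
  by (cases "ps ! i") (auto simp: nth_append vertex_rank_append)

lemma target_rank_le: "target_rank ps i \<le> count_vertices ps"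
  unfolding target_rank_def by (cases "ps ! i") (auto simp: vertex_rank_le)

lemma target_rank_0: "ps \<noteq> [] \<Longrightarrow> \<not> is_ptr (hd ps) \<Longrightarrow> target_rank ps 0 = 1"
  by (cases ps) (auto simp: target_rank_def vertex_rank_def split: rtree.split)

lemma target_rank_vertex: "\<not> is_ptr (ps ! i) \<Longrightarrow> target_rank ps i = vertex_rank ps i"
  by (cases "ps ! i") (auto simp: target_rank_def)

text \<open>Node \<open>i\<close> is read in the prefix of length \<open>i + 1\<close>,
  so that the path of a prefix is a prefix of the path.\<close>
definition node_step :: "rtree list \<Rightarrow> nat \<Rightarrow> step" where
  "node_step ps i = (case ps ! i of Ptr k \<Rightarrow> H (vertex_rank ps k) | _ \<Rightarrow> V)"

definition nodes_path :: "rtree list \<Rightarrow> step list" where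
  "nodes_path ps = map (\<lambda>i. node_step (take (Suc i) ps) i) [1..<length ps]"

lemma length_nodes_path [simp]: "length (nodes_path ps) = length ps - 1"
  by (simp add: nodes_path_def)

lemma nodes_path_single [simp]: "nodes_path [p] = []"
  by (simp add: nodes_path_def)

lemma nodes_path_snoc:
  assumes "ps \<noteq> []"
  shows "nodes_path (ps @ [p]) = nodes_path ps @ [node_step (ps @ [p]) (length ps)]"
proof -
  have "[1..<length (ps @ [p])] = [1..<length ps] @ [length ps]"
    using assms by (simp add: Suc_leI)
  then show ?thesis
    unfolding nodes_path_def by simp
qed

lemma node_step_snoc_Ptr:
  "k < length ps \<Longrightarrow> node_step (ps @ [Ptr k]) (length ps) = H (vertex_rank ps k)"
  by (simp add: node_step_def vertex_rank_append)

lemma node_step_snoc_vertex: "\<not> is_ptr p \<Longrightarrow> node_step (ps @ [p]) (length ps) = V"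
  by (cases p) (auto simp: node_step_def)

lemma nodes_path_take: "nodes_path (take (Suc m) ps) = take m (nodes_path ps)"
proof -
  have "take m [Suc 0..<length ps] = [Suc 0..<min (Suc m) (length ps)]"
    by (cases "Suc m \<le> length ps") (simp_all add: take_upt min_def)
  then show ?thesis
    unfolding nodes_path_def by (auto simp: take_map min_def intro!: map_cong)
qed

lemma ycoord_nodes_path:
  "ps \<noteq> [] \<Longrightarrow> \<not> is_ptr (hd ps) \<Longrightarrow> ycoord (nodes_path ps) + 1 = count_vertices ps"
proof (induction ps rule: rev_induct)
  case (snoc p ps)
  show ?case
  proof (cases "ps = []")
    case False
    have "ycoord [node_step (ps @ [p]) (length ps)] = (if is_ptr p then 0 else 1)"
      by (cases p) (auto simp: node_step_def)
    then show ?thesis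
      using snoc False by (simp add: nodes_path_snoc)
  qed (use snoc.prems in simp)
qed simp

lemma step_label_nodes_path:
  assumes "backward_pointers ps" "\<not> is_ptr (hd ps)" "j < length (nodes_path ps)"
  shows "step_label (nodes_path ps) j = target_rank ps (Suc j)"
proof -
  have step: "nodes_path ps ! j = node_step (take (Suc (Suc j)) ps) (Suc j)"
    using assms(3) by (simp add: nodes_path_def)
  show ?thesis
  proof (cases "is_ptr (ps ! Suc j)")
    case True
    then obtain k where k: "ps ! Suc j = Ptr k" by (cases "ps ! Suc j") auto
    then have "k < Suc j" using assms(1,3) unfolding backward_pointers_def by auto
    then show ?thesis
      using step k assms(3)
      by (simp add: step_label_def target_rank_def node_step_def vertex_rank_def min_def)
  next
    case False
    have "ps \<noteq> []" using assms(3) by auto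
    then have "ycoord (take (Suc j) (nodes_path ps)) + 1 = count_vertices (take (Suc (Suc j)) ps)"
      using ycoord_nodes_path[of "take (Suc (Suc j)) ps"] nodes_path_take[of "Suc j" ps] assms(2)
      by (simp add: hd_take)
    moreover have "nodes_path ps ! j = V"
      using step False assms(3) by (cases "ps ! Suc j") (auto simp: node_step_def)
    ultimately show ?thesis
      using False by (simp add: step_label_def target_rank_vertex vertex_rank_def)
  qed
qed

definition forest_nodes :: "rtree list \<Rightarrow> rtree list" where
  "forest_nodes st = concat (map postorder st)"

definition forest_path :: "rtree list \<Rightarrow> step list" where
  "forest_path st = nodes_path (forest_nodes st)"

text \<open>The forests met while reading a relaxed tree in postorder: the maximal subtrees read so far,
  the first one containing the left-most leaf, with every pointer into the part already read.\<close>
definition relaxed_forest :: "rtree list \<Rightarrow> bool" where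
  "relaxed_forest st \<longleftrightarrow> st \<noteq> [] \<and> leaves_ok (hd st) \<and> (\<forall>t\<in>set (tl st). no_leftleaf t)
     \<and> backward_pointers (forest_nodes st)"

definition forest_trees :: "rtree list \<Rightarrow> btree list" where
  "forest_trees st = foldl (\<lambda>env t. expand t env) [] st"

definition root_positions :: "rtree list \<Rightarrow> nat list" where
  "root_positions st = map (\<lambda>i. length (forest_nodes (take (Suc i) st)) - 1) [0..<length st]"

lemma forest_nodes_simps [simp]:
  "forest_nodes [] = []" "forest_nodes (st @ ts) = forest_nodes st @ forest_nodes ts"
  "forest_nodes [t] = postorder t" "forest_nodes (t # ts) = postorder t @ forest_nodes ts"
  by (auto simp: forest_nodes_def)

lemma postorder_ne [simp]: "postorder t \<noteq> []"
  by (cases t) auto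

lemma length_postorder_pos [simp]: "0 < length (postorder t)"
  by (simp add: length_greater_0_conv)

lemma forest_nodes_eq_Nil_iff [simp]: "forest_nodes st = [] \<longleftrightarrow> st = []"
  by (cases st) auto

lemma expand_eq_append: "\<exists>zs. expand t env = env @ zs \<and> length zs = length (postorder t)"
proof (induction t arbitrary: env)
  case (Node l r)
  obtain zs1 where "expand l env = env @ zs1" "length zs1 = length (postorder l)"
    using Node.IH(1) by blast
  moreover obtain zs2
    where "expand r (expand l env) = expand l env @ zs2" "length zs2 = length (postorder r)"
    using Node.IH(2) by blast
  ultimately show ?case by (simp add: Let_def)
qed auto

lemma length_expand [simp]: "length (expand t env) = length env + length (postorder t)"
  using expand_eq_append[of t env] by auto

lemma nth_expand: "i < length env \<Longrightarrow> expand t env ! i = env ! i"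
  using expand_eq_append[of t env] by (auto simp: nth_append)

lemma forest_trees_snoc: "forest_trees (st @ [t]) = expand t (forest_trees st)"
  by (simp add: forest_trees_def)

lemma length_forest_trees [simp]: "length (forest_trees st) = length (forest_nodes st)"
  by (induction st rule: rev_induct) (auto simp: forest_trees_def)

lemma nth_forest_trees_append:
  "i < length (forest_nodes st) \<Longrightarrow> forest_trees (st @ ts) ! i = forest_trees st ! i"
proof (induction ts rule: rev_induct)
  case (snoc t ts)
  then show ?case
    using nth_expand[of i "forest_trees (st @ ts)" t]
    by (simp add: forest_trees_snoc flip: append_assoc)
qed simp

lemma forest_trees_snoc_Ptr: "forest_trees (st @ [Ptr k]) = forest_trees st @ [forest_trees st ! k]"
  by (simp add: forest_trees_snoc)

lemma forest_trees_snoc_Node: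
  fixes st :: "rtree list" and l r :: rtree
  defines "a \<equiv> length (forest_nodes (st @ [l])) - 1"
    and "b \<equiv> length (forest_nodes (st @ [l, r])) - 1"
  shows "forest_trees (st @ [Node l r]) =
    forest_trees (st @ [l, r]) @ [Nd (forest_trees (st @ [l, r]) ! a) (forest_trees (st @ [l, r]) ! b)]"
proof -
  have "forest_trees (st @ [l]) \<noteq> []" "forest_trees (st @ [l, r]) \<noteq> []"
    by (simp_all flip: length_greater_0_conv)
  moreover have "forest_trees (st @ [l]) ! a = forest_trees (st @ [l, r]) ! a"
    using nth_forest_trees_append[of a "st @ [l]" "[r]"] by (simp add: a_def)
  ultimately show ?thesis
    using forest_trees_snoc[of "st @ [l]" r]
    by (simp add: forest_trees_snoc Let_def last_conv_nth a_def b_def add.assoc)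
qed

lemma root_positions_snoc:
  "root_positions (st @ [t]) =
     root_positions st @ [length (forest_nodes st) + length (postorder t) - 1]"
  by (auto simp: root_positions_def nth_append)

lemma nth_root_positions_append:
  "k < length st \<Longrightarrow> root_positions (st @ ts) ! k = root_positions st ! k"
  by (simp add: root_positions_def)

lemma length_root_positions [simp]: "length (root_positions st) = length st"
  by (simp add: root_positions_def)

lemma hd_forest_nodes: "st \<noteq> [] \<Longrightarrow> leaves_ok (hd st) \<Longrightarrow> hd (forest_nodes st) = LeftLeaf"
proof -
  have "leaves_ok t \<Longrightarrow> hd (postorder t) = LeftLeaf" for t
    by (induction t) auto
  then show "st \<noteq> [] \<Longrightarrow> leaves_ok (hd st) \<Longrightarrow> hd (forest_nodes st) = LeftLeaf"
    by (cases st) auto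
qed

lemma relaxed_forest_ne: "relaxed_forest st \<Longrightarrow> st \<noteq> []"
  by (simp add: relaxed_forest_def)

lemma relaxed_forest_hd_nodes: "relaxed_forest st \<Longrightarrow> hd (forest_nodes st) = LeftLeaf"
  unfolding relaxed_forest_def using hd_forest_nodes by blast

lemma relaxed_forest_LeftLeaf: "relaxed_forest [LeftLeaf]"
  by (simp add: relaxed_forest_def backward_pointers_def)

lemma relaxed_forest_snoc_LeftLeaf_iff: "relaxed_forest (st @ [LeftLeaf]) \<longleftrightarrow> st = []"
  by (cases st) (auto simp: relaxed_forest_def backward_pointers_def)

lemma relaxed_forest_snoc:
  "relaxed_forest (st @ [t]) \<longleftrightarrow>
     (if st = [] then leaves_ok t
      else leaves_ok (hd st) \<and> (\<forall>u\<in>set (tl st). no_leftleaf u) \<and> no_leftleaf t)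
     \<and> backward_pointers (forest_nodes st @ postorder t)"
  unfolding relaxed_forest_def forest_nodes_simps(2,3) by (cases st) auto

lemma relaxed_forest_snoc_Ptr_iff:
  "relaxed_forest (st @ [Ptr k]) \<longleftrightarrow> relaxed_forest st \<and> k \<in> vertex_positions (forest_nodes st)"
  by (simp add: relaxed_forest_snoc) (auto simp: relaxed_forest_def backward_pointers_snoc_Ptr_iff)

lemma relaxed_forest_snoc_Node_iff: "relaxed_forest (st @ [Node l r]) \<longleftrightarrow> relaxed_forest (st @ [l, r])"
proof -
  have "backward_pointers (forest_nodes (st @ [l, r]) @ [Node l r]) \<longleftrightarrow>
      backward_pointers (forest_nodes (st @ [l, r]))"
    using backward_pointers_appendD[of "forest_nodes (st @ [l, r])" "[Node l r]"]
      backward_pointers_snoc_vertex[of "forest_nodes (st @ [l, r])" "Node l r"] by auto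
  moreover have "relaxed_forest (st @ [l, r]) = relaxed_forest ((st @ [l]) @ [r])" by simp
  ultimately show ?thesis
    unfolding relaxed_forest_snoc by (cases st) auto
qed

lemma relaxed_forest_induct [consumes 1, case_names LeftLeaf Ptr Node]:
  assumes "relaxed_forest st"
    and "P [LeftLeaf]"
    and "\<And>st k. relaxed_forest st \<Longrightarrow> k \<in> vertex_positions (forest_nodes st) \<Longrightarrow> P st \<Longrightarrow> P (st @ [Ptr k])"
    and "\<And>st l r. relaxed_forest (st @ [l, r]) \<Longrightarrow> P (st @ [l, r]) \<Longrightarrow> P (st @ [Node l r])"
  shows "P st"
  using assms(1)
proof (induction "length (forest_nodes st)" arbitrary: st rule: less_induct)
  case less
  then have "st \<noteq> []" by (simp add: relaxed_forest_ne)
  then obtain ts t where st: "st = ts @ [t]" by (metis rev_exhaust)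
  show ?case
  proof (cases t)
    case LeftLeaf
    then show ?thesis using less.prems st assms(2) by (simp add: relaxed_forest_snoc_LeftLeaf_iff)
  next
    case (Ptr k)
    then show ?thesis using less st assms(3) by (simp add: relaxed_forest_snoc_Ptr_iff)
  next
    case (Node l r)
    then show ?thesis using less st assms(4) by (simp add: relaxed_forest_snoc_Node_iff)
  qed
qed

lemma relaxed_forest_cases [consumes 1, case_names LeftLeaf Ptr Node]:
  assumes "relaxed_forest st"
  obtains "st = [LeftLeaf]"
  | s k where "st = s @ [Ptr k]" "relaxed_forest s" "k \<in> vertex_positions (forest_nodes s)"
  | s l r where "st = s @ [Node l r]" "relaxed_forest (s @ [l, r])"
proof -
  obtain s t where st: "st = s @ [t]"
    using relaxed_forest_ne[OF assms] by (metis rev_exhaust)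
  then show ?thesis
    using that assms
    by (cases t) (auto simp: relaxed_forest_snoc_LeftLeaf_iff relaxed_forest_snoc_Ptr_iff
        relaxed_forest_snoc_Node_iff)
qed

lemma length_forest_path [simp]: "length (forest_path st) = length (forest_nodes st) - 1"
  by (simp add: forest_path_def)

lemma forest_path_LeftLeaf [simp]: "forest_path [LeftLeaf] = []"
  by (simp add: forest_path_def)

lemma forest_path_snoc_Ptr:
  "st \<noteq> [] \<Longrightarrow> k \<in> vertex_positions (forest_nodes st) \<Longrightarrow>
     forest_path (st @ [Ptr k]) = forest_path st @ [H (vertex_rank (forest_nodes st) k)]"
  by (simp add: forest_path_def nodes_path_snoc node_step_snoc_Ptr vertex_positions_def)

lemma forest_path_snoc_Node: "forest_path (st @ [Node l r]) = forest_path (st @ [l, r]) @ [V]"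
  using nodes_path_snoc[of "forest_nodes (st @ [l, r])" "Node l r"]
    node_step_snoc_vertex[of "Node l r" "forest_nodes (st @ [l, r])"]
  by (simp add: forest_path_def)

lemma forest_path_endpoint:
  "relaxed_forest st \<Longrightarrow> xcoord (forest_path st) + 1 = ycoord (forest_path st) + length st"
proof (induction st rule: relaxed_forest_induct)
  case (Ptr st k)
  then show ?case by (simp add: forest_path_snoc_Ptr relaxed_forest_ne)
next
  case (Node st l r)
  then show ?case by (simp add: forest_path_snoc_Node)
qed (simp add: forest_path_def)

lemma count_vertices_forest_nodes:
  assumes "relaxed_forest st"
  shows "count_vertices (forest_nodes st) = ycoord (forest_path st) + 1"
proof -
  have "hd (forest_nodes st) = LeftLeaf" "forest_nodes st \<noteq> []"
    using assms relaxed_forest_hd_nodes relaxed_forest_ne by auto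
  then show ?thesis
    using ycoord_nodes_path[of "forest_nodes st"] by (simp add: forest_path_def)
qed

lemma hdec_path_forest_path: "relaxed_forest st \<Longrightarrow> hdec_path (forest_path st)"
proof (induction st rule: relaxed_forest_induct)
  case (Ptr st k)
  then have "k < length (forest_nodes st)" "\<not> is_ptr (forest_nodes st ! k)"
    by (simp_all add: vertex_positions_def)
  then have "1 \<le> vertex_rank (forest_nodes st) k"
    "vertex_rank (forest_nodes st) k \<le> ycoord (forest_path st) + 1"
    using vertex_rank_pos vertex_rank_le[of "forest_nodes st" k] count_vertices_forest_nodes[OF Ptr(1)]
    by simp_all
  then show ?case
    using Ptr
    by (simp add: forest_path_snoc_Ptr relaxed_forest_ne hdec_path_snoc admissible_step_def)
next
  case (Node st l r)
  then show ?case
    using forest_path_endpoint[OF Node(1)]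
    by (simp add: forest_path_snoc_Node hdec_path_snoc admissible_step_def)
qed (simp add: forest_path_def)

text \<open>The shift matches node positions, node \<open>p\<close> being read as step \<open>p - 1\<close>.\<close>
definition last_on_diag :: "step list \<Rightarrow> nat \<Rightarrow> nat" where
  "last_on_diag xs k =
     (let S = {j. j < length xs \<and> diag xs j = int k} in if S = {} then 0 else Suc (Max S))"

lemma last_on_diag_Nil [simp]: "last_on_diag [] k = 0"
  by (simp add: last_on_diag_def)

lemma diag_snoc_length:
  "diag (xs @ [s]) (length xs) = int (xcoord (xs @ [s])) - int (ycoord (xs @ [s]))"
  by (simp add: diag_def)

lemma last_on_diag_snoc:
  "last_on_diag (xs @ [s]) k =
     (if int (xcoord (xs @ [s])) - int (ycoord (xs @ [s])) = int k then Suc (length xs)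
      else last_on_diag xs k)"
proof -
  let ?S = "{j. j < length xs \<and> diag xs j = int k}"
  have "{j. j < length (xs @ [s]) \<and> diag (xs @ [s]) j = int k} =
      (if diag (xs @ [s]) (length xs) = int k then insert (length xs) ?S else ?S)"
    by (auto simp: less_Suc_eq diag_append)
  moreover have "Max (insert (length xs) ?S) = length xs"
    by (rule Max_eqI) auto
  ultimately show ?thesis
    unfolding last_on_diag_def Let_def diag_snoc_length by auto
qed

lemma v1_snoc_V_last_on_diag:
  assumes "diag (xs @ [V]) (length xs) = int k"
  shows "v1 (xs @ [V]) (length xs) =
    (if last_on_diag xs k = 0 then 1 else step_label xs (last_on_diag xs k - 1))"
proof -
  let ?S = "{j. j < length xs \<and> diag xs j = int k}"
  have "{j. j < length xs \<and> diag (xs @ [V]) j = diag (xs @ [V]) (length xs)} = ?S"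
    using assms by (auto simp: diag_append)
  moreover have "?S \<noteq> {} \<Longrightarrow> Max ?S < length xs"
    by (subst Max_less_iff) auto
  ultimately show ?thesis
    by (auto simp: v1_def last_on_diag_def Let_def step_label_append)
qed

text \<open>Reading a pointer adds a tree and an \<open>H\<close> step, reading an internal node merges the last two
  trees with a \<open>V\<close> step. Hence the path of a forest of \<open>k + 1\<close> trees ends on the diagonal
  \<open>x - y = k\<close>, and the root of the \<open>k\<close>-th tree is read at the last visit of that diagonal.\<close>
lemma root_positions_last_on_diag:
  "relaxed_forest st \<Longrightarrow> k < length st \<Longrightarrow> root_positions st ! k = last_on_diag (forest_path st) k"
proof (induction st arbitrary: k rule: relaxed_forest_induct)
  case LeftLeaf
  then show ?case by (simp add: root_positions_def forest_path_def)
next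
  case (Ptr st k')
  have "st \<noteq> []" using Ptr(1) by (rule relaxed_forest_ne)
  then show ?case
    using Ptr forest_path_endpoint[OF Ptr(1)]
    by (auto simp: forest_path_snoc_Ptr root_positions_snoc last_on_diag_snoc
        nth_append less_Suc_eq)
next
  case (Node st l r)
  let ?p = "forest_path (st @ [l, r])"
  have diag: "int (xcoord (?p @ [V])) - int (ycoord (?p @ [V])) = int (length st)"
    using forest_path_endpoint[OF Node(1)] by simp
  have roots: "root_positions (st @ [Node l r]) = root_positions st @ [Suc (length ?p)]"
    by (simp add: root_positions_snoc)
  show ?case
  proof (cases "k < length st")
    case True
    then have "root_positions (st @ [Node l r]) ! k = root_positions (st @ [l, r]) ! k"
      by (simp add: roots nth_append nth_root_positions_append[of k st "[l, r]"])
    also have "\<dots> = last_on_diag ?p k"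
      using Node(2) True by simp
    also have "\<dots> = last_on_diag (?p @ [V]) k"
      using diag True by (simp add: last_on_diag_snoc)
    finally show ?thesis
      by (simp add: forest_path_snoc_Node)
  next
    case False
    then show ?thesis
      using diag Node(3) by (simp add: roots forest_path_snoc_Node last_on_diag_snoc nth_append)
  qed
qed

lemma step_label_forest_path:
  "relaxed_forest st \<Longrightarrow> j < length (forest_path st) \<Longrightarrow>
     step_label (forest_path st) j = target_rank (forest_nodes st) (Suc j)"
  using step_label_nodes_path[of "forest_nodes st" j] relaxed_forest_hd_nodes[of st]
  by (simp add: forest_path_def relaxed_forest_def)

lemma v1_forest_path_snoc_V:
  assumes "relaxed_forest (st @ [l, r])"
  shows "v1 (forest_path (st @ [l, r]) @ [V]) (length (forest_path (st @ [l, r]))) =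
    target_rank (forest_nodes (st @ [l, r])) (length (forest_nodes (st @ [l])) - 1)"
proof -
  define ps where "ps = forest_nodes (st @ [l, r])"
  define p where "p = forest_path (st @ [l, r])"
  define a where "a = length (forest_nodes (st @ [l])) - 1"
  have "length ps = length (forest_nodes (st @ [l])) + length (postorder r)" "length p = length ps - 1"
    "length (forest_nodes (st @ [l])) = length (forest_nodes st) + length (postorder l)"
    by (simp_all add: ps_def p_def)
  then have "a - 1 < length p"
    using length_postorder_pos[of l] length_postorder_pos[of r] unfolding a_def by linarith
  then have "step_label p (a - 1) = target_rank ps a" if "0 < a"
    using step_label_forest_path[OF assms, of "a - 1", folded p_def ps_def] that by simp
  moreover have "diag (p @ [V]) (length p) = int (length st)"
    using forest_path_endpoint[OF assms]
    by (simp add: p_def diag_snoc_length del: length_forest_path)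
  moreover have "last_on_diag p (length st) = a"
    using root_positions_last_on_diag[OF assms, of "length st"]
      root_positions_snoc[of st l] nth_root_positions_append[of "length st" "st @ [l]" "[r]"]
    by (simp add: a_def p_def nth_append)
  moreover have "target_rank ps 0 = 1"
    using relaxed_forest_hd_nodes[OF assms] by (intro target_rank_0) (simp_all add: ps_def)
  ultimately show ?thesis
    unfolding p_def[symmetric] ps_def[symmetric] a_def[symmetric]
    by (simp add: v1_snoc_V_last_on_diag)
qed

lemma v2_forest_path_snoc_V:
  assumes "relaxed_forest (st @ [l, r])"
  shows "v2 (forest_path (st @ [l, r]) @ [V]) (length (forest_path (st @ [l, r]))) =
    target_rank (forest_nodes (st @ [l, r])) (length (forest_nodes (st @ [l, r])) - 1)"
proof -
  define ps where "ps = forest_nodes (st @ [l, r])"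
  define p where "p = forest_path (st @ [l, r])"
  have "length ps = length (forest_nodes st) + length (postorder l) + length (postorder r)"
    "length p = length ps - 1"
    by (simp_all add: ps_def p_def)
  then have len: "0 < length p" "Suc (length p - 1) = length ps - 1"
    using length_postorder_pos[of l] length_postorder_pos[of r] by linarith+
  have "v2 (p @ [V]) (length p) = step_label p (length p - 1)"
    using v2_snoc_V[of p] len(1) by simp
  also have "\<dots> = target_rank ps (Suc (length p - 1))"
    using step_label_forest_path[OF assms, of "length p - 1", folded p_def ps_def] len(1) by simp
  also have "\<dots> = target_rank ps (length ps - 1)"
    by (simp only: len(2))
  finally show ?thesis
    unfolding p_def ps_def .
qed

definition trees_agree :: "rtree list \<Rightarrow> bool" where
  "trees_agree st \<longleftrightarrow> (\<forall>i < length (forest_nodes st).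
     forest_trees st ! i = path_trees (forest_path st) ! (target_rank (forest_nodes st) i - 1))"

lemma trees_agree_LeftLeaf: "trees_agree [LeftLeaf]"
  by (simp add: trees_agree_def forest_trees_def target_rank_def vertex_rank_def)

lemma trees_agree_snoc_Ptr:
  assumes "relaxed_forest st" "k \<in> vertex_positions (forest_nodes st)" "trees_agree st"
  shows "trees_agree (st @ [Ptr k])"
  unfolding trees_agree_def
proof (intro allI impI)
  let ?ps = "forest_nodes st"
  fix i assume i: "i < length (forest_nodes (st @ [Ptr k]))"
  have ptrs: "backward_pointers ?ps" and k: "k < length ?ps" "\<not> is_ptr (?ps ! k)"
    using assms(1,2) by (auto simp: relaxed_forest_def vertex_positions_def)
  have "target_rank (?ps @ [Ptr k]) i = target_rank ?ps (if i < length ?ps then i else k)"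
  proof (cases "i < length ?ps")
    case False
    then have "i = length ?ps" using i by simp
    then show ?thesis
      using k by (simp add: target_rank_def vertex_rank_append target_rank_vertex[symmetric])
  qed (simp add: target_rank_append[OF ptrs])
  then show "forest_trees (st @ [Ptr k]) ! i =
      path_trees (forest_path (st @ [Ptr k])) ! (target_rank (forest_nodes (st @ [Ptr k])) i - 1)"
    using assms i k
    by (auto simp: trees_agree_def forest_path_snoc_Ptr relaxed_forest_ne forest_trees_snoc_Ptr
        nth_append)
qed

text \<open>The new node \<open>Node l r\<close> unfolds to the tree over the unfoldings of the roots of \<open>l\<close> and
  \<open>r\<close>, whose ranks are \<open>v\<^sub>1\<close> and \<open>v\<^sub>2\<close> of the new vertical step.\<close>
lemma trees_agree_snoc_Node:
  assumes "relaxed_forest (st @ [l, r])" "trees_agree (st @ [l, r])"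
  shows "trees_agree (st @ [Node l r])"
  unfolding trees_agree_def
proof (intro allI impI)
  define ps where "ps = forest_nodes (st @ [l, r])"
  define p where "p = forest_path (st @ [l, r])"
  define a where "a = length (forest_nodes (st @ [l])) - 1"
  define b where "b = length ps - 1"
  fix i assume i: "i < length (forest_nodes (st @ [Node l r]))"
  have "length ps = length (forest_nodes (st @ [l])) + length (postorder r)"
    by (simp add: ps_def)
  then have ab: "a < length ps" "b < length ps"
    using length_postorder_pos[of r] unfolding a_def b_def by linarith+
  have nodes: "forest_nodes (st @ [Node l r]) = ps @ [Node l r]"
    by (simp add: ps_def)
  have trees: "forest_trees (st @ [Node l r]) =
      forest_trees (st @ [l, r]) @ [Nd (forest_trees (st @ [l, r]) ! a) (forest_trees (st @ [l, r]) ! b)]"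
    "length (forest_trees (st @ [l, r])) = length ps"
    using forest_trees_snoc_Node unfolding a_def b_def ps_def by simp_all
  have old: "forest_trees (st @ [l, r]) ! j = path_trees p ! (target_rank ps j - 1)"
    if "j < length ps" for j
    using assms(2) that unfolding trees_agree_def ps_def p_def by blast
  have ranks: "target_rank ps j - 1 < length (path_trees p)" for j
    using target_rank_le[of ps j] count_vertices_forest_nodes[OF assms(1), folded ps_def p_def]
    by simp
  show "forest_trees (st @ [Node l r]) ! i =
      path_trees (forest_path (st @ [Node l r])) ! (target_rank (forest_nodes (st @ [Node l r])) i - 1)"
  proof (cases "i < length ps")
    case True
    have "forest_trees (st @ [Node l r]) ! i = path_trees (p @ [V]) ! (target_rank ps i - 1)"
      using True trees old ranks
      by (simp add: nth_append nth_path_trees_append del: path_trees_snoc_V)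
    then show ?thesis
      unfolding nodes forest_path_snoc_Node p_def[symmetric]
      using target_rank_append[of ps i "[Node l r]"] assms(1) True
      by (simp add: relaxed_forest_def ps_def)
  next
    case False
    then have i: "i = length ps"
      using i unfolding nodes by simp
    have "forest_trees (st @ [Node l r]) ! i =
        Nd (path_trees p ! (target_rank ps a - 1)) (path_trees p ! (target_rank ps b - 1))"
      using i trees old ab by (simp add: nth_append)
    also have "\<dots> = path_trees (p @ [V]) ! length (path_trees p)"
      using v1_forest_path_snoc_V[OF assms(1), folded ps_def p_def a_def]
        v2_forest_path_snoc_V[OF assms(1), folded ps_def p_def b_def]
      by (simp add: nth_append del: length_path_trees)
    also have "length (path_trees p) = target_rank (ps @ [Node l r]) i - 1"
      using count_vertices_forest_nodes[OF assms(1), folded ps_def p_def] i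
      by (simp add: target_rank_def vertex_rank_def)
    finally show ?thesis
      unfolding nodes forest_path_snoc_Node p_def[symmetric] .
  qed
qed

lemma relaxed_forest_trees_agree: "relaxed_forest st \<Longrightarrow> trees_agree st"
  by (induction st rule: relaxed_forest_induct)
    (simp_all add: trees_agree_LeftLeaf trees_agree_snoc_Ptr trees_agree_snoc_Node)

section \<open>Compacted trees and C-decorated paths\<close>

lemma inj_on_nth_lessThan_iff: "inj_on ((!) xs) {..<length xs} \<longleftrightarrow> distinct xs"
  unfolding distinct_conv_nth inj_on_def by auto

lemma inj_on_forest_trees_iff:
  assumes "relaxed_forest st"
  shows "inj_on ((!) (forest_trees st)) (vertex_positions (forest_nodes st)) \<longleftrightarrow>
    distinct (path_trees (forest_path st))"
proof -
  let ?ps = "forest_nodes st" and ?ts = "path_trees (forest_path st)"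
  let ?rank = "\<lambda>k. vertex_rank ?ps k - 1"
  have bij: "bij_betw ?rank (vertex_positions ?ps) {..<length ?ts}"
    using bij_betw_vertex_rank[of ?ps] count_vertices_forest_nodes[OF assms] by simp
  have "inj_on ((!) (forest_trees st)) (vertex_positions ?ps) \<longleftrightarrow>
      inj_on ((!) ?ts \<circ> ?rank) (vertex_positions ?ps)"
    using relaxed_forest_trees_agree[OF assms]
    by (intro inj_on_cong) (simp add: trees_agree_def vertex_positions_def target_rank_vertex)
  also have "\<dots> \<longleftrightarrow> inj_on ((!) ?ts) (?rank ` vertex_positions ?ps)"
    by (rule comp_inj_on_iff[OF bij_betw_imp_inj_on[OF bij], symmetric])
  also have "?rank ` vertex_positions ?ps = {..<length ?ts}"
    by (rule bij_betw_imp_surj_on[OF bij])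
  finally show ?thesis
    using inj_on_nth_lessThan_iff[of ?ts] by simp
qed

lemma forest_path_inj:
  "relaxed_forest st \<Longrightarrow> relaxed_forest st' \<Longrightarrow> forest_path st = forest_path st' \<Longrightarrow> st = st'"
proof (induction st arbitrary: st' rule: relaxed_forest_induct)
  case LeftLeaf
  from LeftLeaf(1) show ?case
    by (cases rule: relaxed_forest_cases)
      (use LeftLeaf(2) in \<open>auto simp: forest_path_snoc_Ptr forest_path_snoc_Node
        relaxed_forest_ne\<close>)
next
  case (Ptr st k)
  note IH = Ptr.IH and hyps = Ptr.hyps and prems = Ptr.prems
  from prems(1) show ?case
  proof (cases rule: relaxed_forest_cases)
    case (Ptr s k')
    then have "forest_path st @ [H (vertex_rank (forest_nodes st) k)] =
        forest_path s @ [H (vertex_rank (forest_nodes s) k')]"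
      using prems(2) hyps by (simp add: forest_path_snoc_Ptr relaxed_forest_ne)
    then have "forest_path st = forest_path s"
      "vertex_rank (forest_nodes st) k = vertex_rank (forest_nodes s) k'"
      by simp_all
    then have "st = s" "vertex_rank (forest_nodes s) k = vertex_rank (forest_nodes s) k'"
      using IH[OF Ptr(2)] by simp_all
    moreover from this have "k = k'"
      using inj_onD[OF inj_on_vertex_rank] hyps(2) Ptr(3) by blast
    ultimately show ?thesis using Ptr(1) by simp
  qed (use prems hyps in \<open>auto simp: forest_path_snoc_Ptr forest_path_snoc_Node relaxed_forest_ne\<close>)
next
  case (Node st l r)
  from Node(3) show ?case
  proof (cases rule: relaxed_forest_cases)
    case (Node s l' r')
    then have "st @ [l, r] = s @ [l', r']"
      using Node.prems(2) Node.IH by (simp add: forest_path_snoc_Node)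
    then show ?thesis using Node by (simp add: append_eq_append_conv)
  qed (use Node.prems in \<open>auto simp: forest_path_snoc_Ptr forest_path_snoc_Node
        relaxed_forest_ne\<close>)
qed

lemma forest_path_surj: "hdec_path xs \<Longrightarrow> \<exists>st. relaxed_forest st \<and> forest_path st = xs"
proof (induction xs rule: rev_induct)
  case Nil
  show ?case
    using relaxed_forest_LeftLeaf by (intro exI[of _ "[LeftLeaf]"]) (simp add: forest_path_def)
next
  case (snoc s xs)
  then have adm: "admissible_step xs s"
    by (simp add: hdec_path_snoc)
  obtain st where st: "relaxed_forest st" "forest_path st = xs"
    using snoc hdec_path_appendD by blast
  show ?case
  proof (cases s)
    case (H d)
    then have "1 \<le> d" "d \<le> count_vertices (forest_nodes st)"
      using adm count_vertices_forest_nodes[OF st(1)] st(2) by (auto simp: admissible_step_def)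
    then obtain k where "k \<in> vertex_positions (forest_nodes st)" "vertex_rank (forest_nodes st) k = d"
      using vertex_rank_surj by blast
    then show ?thesis
      using st H relaxed_forest_ne[OF st(1)]
      by (intro exI[of _ "st @ [Ptr k]"])
        (simp add: relaxed_forest_snoc_Ptr_iff forest_path_snoc_Ptr)
  next
    case V
    then have "2 \<le> length st"
      using adm forest_path_endpoint[OF st(1)] st(2) by (simp add: admissible_step_def)
    then obtain st' r where "st = st' @ [r]"
      by (cases st rule: rev_exhaust) auto
    moreover from this obtain s0 l where "st' = s0 @ [l]"
      using \<open>2 \<le> length st\<close> by (cases st' rule: rev_exhaust) auto
    ultimately have "st = s0 @ [l, r]" by simp
    then show ?thesis
      using st V
      by (intro exI[of _ "s0 @ [Node l r]"])
        (simp add: relaxed_forest_snoc_Node_iff forest_path_snoc_Node)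
  qed
qed

lemma count_vertices_postorder:
  "(leaves_ok t \<longrightarrow> count_vertices (postorder t) = rsize t + 1) \<and>
   (no_leftleaf t \<longrightarrow> count_vertices (postorder t) = rsize t)"
  by (induction t) auto

lemma relaxed_forest_single_iff: "relaxed_forest [t] \<longleftrightarrow> relaxed t"
  by (simp add: relaxed_forest_def relaxed_def pointers_ok_def backward_pointers_def)

lemma compacted_iff_C_decorated:
  assumes "relaxed t"
  shows "compacted t \<longleftrightarrow> C_decorated (forest_path [t])"
proof -
  have forest: "relaxed_forest [t]"
    using assms by (simp add: relaxed_forest_single_iff)
  have "Bof t = (!) (forest_trees [t])" "vertices t = vertex_positions (forest_nodes [t])"
    by (auto simp: Bof_def forest_trees_def vertices_def vertex_positions_def)
  then show ?thesis
    using assms inj_on_forest_trees_iff[OF forest]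
      distinct_path_trees_iff[OF hdec_path_forest_path[OF forest]]
    by (simp add: compacted_def)
qed

lemma forest_path_single_endpoint:
  assumes "relaxed t"
  shows "xcoord (forest_path [t]) = rsize t" "ycoord (forest_path [t]) = rsize t"
proof -
  have forest: "relaxed_forest [t]"
    using assms by (simp add: relaxed_forest_single_iff)
  then have "leaves_ok t"
    by (simp add: relaxed_forest_def)
  then show "ycoord (forest_path [t]) = rsize t"
    using count_vertices_forest_nodes[OF forest] count_vertices_postorder[of t] by simp
  then show "xcoord (forest_path [t]) = rsize t"
    using forest_path_endpoint[OF forest] by simp
qed

lemma bij_betw_compacted_C_paths:
  "bij_betw (\<lambda>t. forest_path [t]) {t. compacted t \<and> rsize t = n} (C_paths n n)"
proof (rule bij_betw_imageI)
  show "inj_on (\<lambda>t. forest_path [t]) {t. compacted t \<and> rsize t = n}"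
  proof (rule inj_onI)
    fix t u
    assume "t \<in> {t. compacted t \<and> rsize t = n}" "u \<in> {t. compacted t \<and> rsize t = n}"
      and "forest_path [t] = forest_path [u]"
    then have "[t] = [u]"
      by (intro forest_path_inj) (auto simp: compacted_def relaxed_forest_single_iff)
    then show "t = u" by simp
  qed
  show "(\<lambda>t. forest_path [t]) ` {t. compacted t \<and> rsize t = n} = C_paths n n"
  proof
    show "(\<lambda>t. forest_path [t]) ` {t. compacted t \<and> rsize t = n} \<subseteq> C_paths n n"
      using compacted_iff_C_decorated forest_path_single_endpoint
      by (auto simp: C_paths_def compacted_def)
  next
    show "C_paths n n \<subseteq> (\<lambda>t. forest_path [t]) ` {t. compacted t \<and> rsize t = n}"
    proof
      fix xs assume xs: "xs \<in> C_paths n n"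
      then obtain st where st: "relaxed_forest st" "forest_path st = xs"
        using forest_path_surj C_decorated_hdec_path by (auto simp: C_paths_def)
      then have "length st = 1"
        using forest_path_endpoint[OF st(1)] xs by (simp add: C_paths_def)
      then obtain t where t: "st = [t]"
        by (cases st) auto
      then have "relaxed t"
        using st(1) by (simp add: relaxed_forest_single_iff)
      then have "compacted t" "rsize t = n"
        using compacted_iff_C_decorated forest_path_single_endpoint xs st t
        by (auto simp: C_paths_def)
      then show "xs \<in> (\<lambda>t. forest_path [t]) ` {t. compacted t \<and> rsize t = n}"
        using st t by auto
    qed
  qed
qed

theorem proposition2p11:
  shows "(\<forall>n m. 1 \<le> m \<and> m \<le> n \<longrightarrow>
           int (cnum n m) = int (cnum n (m - 1)) + int (m + 1) * int (cnum (n - 1) m)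
                            - int (m - 1) * int (cnum (n - 2) (m - 1)))
       \<and> (\<forall>n m. n < m \<longrightarrow> cnum n m = 0)
       \<and> (\<forall>n. cnum n 0 = 1)
       \<and> (\<forall>n. card {t. compacted t \<and> rsize t = n} = cnum n n)"
proof (intro conjI allI impI)
  fix n m :: nat
  show "1 \<le> m \<and> m \<le> n \<Longrightarrow> int (cnum n m) = int (cnum n (m - 1)) + int (m + 1) * int (cnum (n - 1) m)
                            - int (m - 1) * int (cnum (n - 2) (m - 1))"
    using cnum_recurrence by blast
  show "n < m \<Longrightarrow> cnum n m = 0"
    by (simp add: cnum_eq_card_C_paths C_paths_eq_empty)
  show "cnum n 0 = 1"
    by (simp add: cnum_eq_card_C_paths C_paths_0)
  show "card {t. compacted t \<and> rsize t = n} = cnum n n"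
    using bij_betw_same_card[OF bij_betw_compacted_C_paths] by (simp add: cnum_eq_card_C_paths)
qed

end
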